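(* Let $(r_I)_I$ be a family of idempotent functions $r_I:[0,1]^I\times[0,1]\to[0,1]^I\times[0,1]$ satisfying (1) $r_I(u,z)=(u,z)$ iff $\partial_I u=1$ or $z=0$, and (2) $r_J(f\times\mathrm{id})r_I=r_J(f\times\mathrm{id})$ for every strict $f\in\mathrm{Hom}(I,J)$. Let $(r_\psi)$, for $I$ a finite set of names and $\psi\in\mathbb{F}(I)$, be functions $[0,1]^I\times[0,1]\to[0,1]^I\times[0,1]$ satisfying: (a) $r_\psi=\mathrm{id}$ if $\psi=1_\mathbb{F}$; (b) $r_\psi=r_\psi r_I$ if $\psi\neq1_\mathbb{F}$; (c) $r_\psi(u,z)=(u,z)$ if $z=0$; (d) $r_\psi((ib)\times\mathrm{id})=((ib)\times\mathrm{id})r_{\psi(ib)}$ for $i\in I$, $b\in\{0,1\}$. Then for every morphism $f\in\mathrm{Hom}(I,J)$ and every $\psi\in\mathbb{F}(J)$, $$r_\psi\circ(f\times\mathrm{id})=(f\times\mathrm{id})\circ r_{\psi f}.$$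
   Context: Fix a countably infinite set of names. $\mathsf{dM}(J)$ is the free de Morgan algebra on $J$. The cube category $\mathcal{C}$ has finite sets of names as objects; $f\in\mathrm{Hom}(I,J)$ is a map $J\to\mathsf{dM}(I)$, composed by substitution; $f$ is strict if it never takes value $0$ or $1$. Using the de Morgan algebra $([0,1],\min,\max,1-x)$, $f\in\mathrm{Hom}(I,J)$ induces $f:[0,1]^I\to[0,1]^J$, $(fu)_j=f(j)$ evaluated at $u$. The face map $(ib)\in\mathrm{Hom}(I-\{i\},I)$ sends $i\mapsto b$, $j\mapsto j$ otherwise. The face lattice $\mathbb{F}$ is the distributive lattice generated by $(i=0),(i=1)$ for names $i$ subject to $(i=0)\wedge(i=1)=0_\mathbb{F}$; $\mathbb{F}(I)$ is the sublattice generated by generators with $i\in I$. For $\psi\in\mathbb{F}(J)$ and $f\in\mathrm{Hom}(I,J)$, $\psi f\in\mathbb{F}(I)$ is the substitution sending $(j=1)$ to $(f(j)=1)$ and $(j=0)$ to $(1-f(j)=1)$, where $r\mapsto(r=1)$ is the lattice map $\mathsf{dM}(I)\to\mathbb{F}(I)$ with $i\mapsto(i=1)$, $1-i\mapsto(i=0)$, $0\mapsto 0_\mathbb{F}$, $1\mapsto1_\mathbb{F}$; in particular $\psi(ib)$ substitutes $(i=b)\mapsto 1_\mathbb{F}$, $(i=1-b)\mapsto 0_\mathbb{F}$. For $u\in[0,1]^I$, $\partial_I u=1$ means some $u_i\in\{0,1\}$. *)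

theory Defs
  imports Complex_Main "HOL-Library.FuncSet"
begin

text \<open>Names are natural numbers (a countably infinite set); finite sets of names are
  finite sets of naturals.\<close>

datatype dmt = DVar nat | DZero | DOne | DMeet dmt dmt | DJoin dmt dmt | DNeg dmt

inductive dm_eq :: "dmt \<Rightarrow> dmt \<Rightarrow> bool" where
  dm_refl: "dm_eq x x"
| dm_sym: "dm_eq x y \<Longrightarrow> dm_eq y x"
| dm_trans: "dm_eq x y \<Longrightarrow> dm_eq y z \<Longrightarrow> dm_eq x z"
| dm_cong_meet: "dm_eq x x' \<Longrightarrow> dm_eq y y' \<Longrightarrow> dm_eq (DMeet x y) (DMeet x' y')"
| dm_cong_join: "dm_eq x x' \<Longrightarrow> dm_eq y y' \<Longrightarrow> dm_eq (DJoin x y) (DJoin x' y')"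
| dm_cong_neg: "dm_eq x x' \<Longrightarrow> dm_eq (DNeg x) (DNeg x')"
| dm_meet_assoc: "dm_eq (DMeet (DMeet x y) z) (DMeet x (DMeet y z))"
| dm_join_assoc: "dm_eq (DJoin (DJoin x y) z) (DJoin x (DJoin y z))"
| dm_meet_comm: "dm_eq (DMeet x y) (DMeet y x)"
| dm_join_comm: "dm_eq (DJoin x y) (DJoin y x)"
| dm_meet_absorb: "dm_eq (DMeet x (DJoin x y)) x"
| dm_join_absorb: "dm_eq (DJoin x (DMeet x y)) x"
| dm_distrib: "dm_eq (DMeet x (DJoin y z)) (DJoin (DMeet x y) (DMeet x z))"
| dm_meet_one: "dm_eq (DMeet x DOne) x"
| dm_join_zero: "dm_eq (DJoin x DZero) x"
| dm_meet_zero: "dm_eq (DMeet x DZero) DZero"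
| dm_join_one: "dm_eq (DJoin x DOne) DOne"
| dm_neg_neg: "dm_eq (DNeg (DNeg x)) x"
| dm_neg_meet: "dm_eq (DNeg (DMeet x y)) (DJoin (DNeg x) (DNeg y))"
| dm_neg_join: "dm_eq (DNeg (DJoin x y)) (DMeet (DNeg x) (DNeg y))"
| dm_neg_zero: "dm_eq (DNeg DZero) DOne"
| dm_neg_one: "dm_eq (DNeg DOne) DZero"

lemma equivp_dm_eq: "equivp dm_eq"
  by (intro equivpI reflpI sympI transpI) (auto intro: dm_eq.intros)

quotient_type dm = dmt / dm_eq
  by (rule equivp_dm_eq)

fun dvars :: "dmt \<Rightarrow> nat set" where
  "dvars (DVar i) = {i}"
| "dvars DZero = {}"
| "dvars DOne = {}"
| "dvars (DMeet x y) = dvars x \<union> dvars y"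
| "dvars (DJoin x y) = dvars x \<union> dvars y"
| "dvars (DNeg x) = dvars x"

definition dm_zero :: dm where "dm_zero = abs_dm DZero"
definition dm_one :: dm where "dm_one = abs_dm DOne"

definition dM :: "nat set \<Rightarrow> dm set" where
  "dM I = {abs_dm t | t. dvars t \<subseteq> I}"

text \<open>Values of
  variables are clamped into \<open>[0,1]\<close>; for points of \<open>[0,1]^I\<close> and variables in \<open>I\<close> this
  changes nothing, and it makes evaluation independent of the chosen representative
  even if the representative mentions names outside \<open>I\<close>.\<close>
fun eval_dmt :: "(nat \<Rightarrow> real) \<Rightarrow> dmt \<Rightarrow> real" where
  "eval_dmt u (DVar i) = max 0 (min 1 (u i))"
| "eval_dmt u DZero = 0"
| "eval_dmt u DOne = 1"
| "eval_dmt u (DMeet x y) = min (eval_dmt u x) (eval_dmt u y)"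
| "eval_dmt u (DJoin x y) = max (eval_dmt u x) (eval_dmt u y)"
| "eval_dmt u (DNeg x) = 1 - eval_dmt u x"

definition eval_dm :: "(nat \<Rightarrow> real) \<Rightarrow> dm \<Rightarrow> real" where
  "eval_dm u r = eval_dmt u (rep_dm r)"

text \<open>A morphism \<open>f \<in> Hom(I,J)\<close> is a map \<open>J \<rightarrow> dM(I)\<close> (values outside \<open>J\<close> are irrelevant).\<close>
definition Hom :: "nat set \<Rightarrow> nat set \<Rightarrow> (nat \<Rightarrow> dm) set" where
  "Hom I J = J \<rightarrow> dM I"

definition strict :: "nat set \<Rightarrow> (nat \<Rightarrow> dm) \<Rightarrow> bool" where
  "strict J f \<longleftrightarrow> (\<forall>j\<in>J. f j \<noteq> dm_zero \<and> f j \<noteq> dm_one)"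

definition cube :: "nat set \<Rightarrow> (nat \<Rightarrow> real) set" where
  "cube I = PiE I (\<lambda>_. {0..1})"

definition cmap :: "nat set \<Rightarrow> (nat \<Rightarrow> dm) \<Rightarrow> (nat \<Rightarrow> real) \<Rightarrow> (nat \<Rightarrow> real)" where
  "cmap J f u = restrict (\<lambda>j. eval_dm u (f j)) J"

definition cmap_id :: "nat set \<Rightarrow> (nat \<Rightarrow> dm) \<Rightarrow> (nat \<Rightarrow> real) \<times> real \<Rightarrow> (nat \<Rightarrow> real) \<times> real" where
  "cmap_id J f x = (cmap J f (fst x), snd x)"

definition face_mor :: "nat \<Rightarrow> bool \<Rightarrow> nat \<Rightarrow> dm" where
  "face_mor i b = (\<lambda>j. if j = i then (if b then dm_one else dm_zero) else abs_dm (DVar j))"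

definition boundary :: "nat set \<Rightarrow> (nat \<Rightarrow> real) \<Rightarrow> bool" where
  "boundary I u \<longleftrightarrow> (\<exists>i\<in>I. u i = 0 \<or> u i = 1)"

text \<open>\<open>FEq i b\<close> is the generator \<open>(i = b)\<close>, with \<open>b\<close> read as \<open>0\<close>/\<open>1\<close>.\<close>
datatype ft = FEq nat bool | FZero | FOne | FMeet ft ft | FJoin ft ft

inductive f_eq :: "ft \<Rightarrow> ft \<Rightarrow> bool" where
  f_refl: "f_eq x x"
| f_sym: "f_eq x y \<Longrightarrow> f_eq y x"
| f_trans: "f_eq x y \<Longrightarrow> f_eq y z \<Longrightarrow> f_eq x z"
| f_cong_meet: "f_eq x x' \<Longrightarrow> f_eq y y' \<Longrightarrow> f_eq (FMeet x y) (FMeet x' y')"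
| f_cong_join: "f_eq x x' \<Longrightarrow> f_eq y y' \<Longrightarrow> f_eq (FJoin x y) (FJoin x' y')"
| f_meet_assoc: "f_eq (FMeet (FMeet x y) z) (FMeet x (FMeet y z))"
| f_join_assoc: "f_eq (FJoin (FJoin x y) z) (FJoin x (FJoin y z))"
| f_meet_comm: "f_eq (FMeet x y) (FMeet y x)"
| f_join_comm: "f_eq (FJoin x y) (FJoin y x)"
| f_meet_absorb: "f_eq (FMeet x (FJoin x y)) x"
| f_join_absorb: "f_eq (FJoin x (FMeet x y)) x"
| f_distrib: "f_eq (FMeet x (FJoin y z)) (FJoin (FMeet x y) (FMeet x z))"
| f_meet_one: "f_eq (FMeet x FOne) x"
| f_join_zero: "f_eq (FJoin x FZero) x"
| f_meet_zero: "f_eq (FMeet x FZero) FZero"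
| f_join_one: "f_eq (FJoin x FOne) FOne"
| f_contra: "f_eq (FMeet (FEq i False) (FEq i True)) FZero"

lemma equivp_f_eq: "equivp f_eq"
  by (intro equivpI reflpI sympI transpI) (auto intro: f_eq.intros)

quotient_type face = ft / f_eq
  by (rule equivp_f_eq)

fun fvars :: "ft \<Rightarrow> nat set" where
  "fvars (FEq i b) = {i}"
| "fvars FZero = {}"
| "fvars FOne = {}"
| "fvars (FMeet x y) = fvars x \<union> fvars y"
| "fvars (FJoin x y) = fvars x \<union> fvars y"

definition face_one :: face where "face_one = abs_face FOne"

definition FL :: "nat set \<Rightarrow> face set" where
  "FL I = {abs_face t | t. fvars t \<subseteq> I}"

text \<open>The lattice map \<open>dM \<rightarrow> \<bbbF>\<close>, \<open>r \<mapsto> (r = 1)\<close> (for \<open>pos = True\<close>),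
  resp. \<open>r \<mapsto> (1 - r = 1)\<close> (for \<open>pos = False\<close>), on terms (negations pushed inwards).\<close>
fun to_ft :: "bool \<Rightarrow> dmt \<Rightarrow> ft" where
  "to_ft pos (DVar i) = FEq i pos"
| "to_ft pos DZero = (if pos then FZero else FOne)"
| "to_ft pos DOne = (if pos then FOne else FZero)"
| "to_ft pos (DMeet x y) = (if pos then FMeet (to_ft pos x) (to_ft pos y) else FJoin (to_ft pos x) (to_ft pos y))"
| "to_ft pos (DJoin x y) = (if pos then FJoin (to_ft pos x) (to_ft pos y) else FMeet (to_ft pos x) (to_ft pos y))"
| "to_ft pos (DNeg x) = to_ft (\<not> pos) x"

fun subst_ft :: "(nat \<Rightarrow> bool \<Rightarrow> ft) \<Rightarrow> ft \<Rightarrow> ft" where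
  "subst_ft s (FEq i b) = s i b"
| "subst_ft s FZero = FZero"
| "subst_ft s FOne = FOne"
| "subst_ft s (FMeet x y) = FMeet (subst_ft s x) (subst_ft s y)"
| "subst_ft s (FJoin x y) = FJoin (subst_ft s x) (subst_ft s y)"

text \<open>\<open>\<psi> f\<close>: substitution \<open>(j=1) \<mapsto> (f(j)=1)\<close>, \<open>(j=0) \<mapsto> (1 - f(j) = 1)\<close>.\<close>
definition face_sub :: "face \<Rightarrow> (nat \<Rightarrow> dm) \<Rightarrow> face" where
  "face_sub \<psi> f = abs_face (subst_ft (\<lambda>j b. to_ft b (rep_dm (f j))) (rep_face \<psi>))"

end

theory Submission
  imports Defs
begin

text \<open>Call \<open>f \<in> Hom(I,J)\<close> natural if \<open>r\<^sub>\<psi> (f \<times> id) = (f \<times> id) r\<^bsub>\<psi> f\<^esub>\<close> for all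
  \<open>\<psi> \<in> \<bbbF>(J)\<close>; we show every \<open>f\<close> is natural by induction on \<open>|I| + |J|\<close>. If \<open>f(j) = b\<close> is
  constant, \<open>f\<close> factors through the face map \<open>(j b)\<close> and (d) reduces the claim to
  \<open>J - {j}\<close>. If \<open>f\<close> is strict and \<open>\<psi> \<noteq> 1\<close>, then also \<open>\<psi> f \<noteq> 1\<close>, so by (b) and (2)
  neither side changes when \<open>x\<close> is replaced by \<open>r\<^sub>I x\<close>, which lies in the open box by (1).
  There either \<open>z = 0\<close> and (c) applies, or the point lies on a face \<open>(i b)\<close> of the cube and
  (d) reduces the claim to \<open>f \<circ> (i b) \<in> Hom(I - {i}, J)\<close>.
  The identities in \<open>\<bbbF>\<close> needed on the way are checked pointwise: an element of \<open>\<bbbF>\<close> is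
  determined by the points of \<open>[0,1]\<^sup>\<nat>\<close> at which it holds.\<close>

section \<open>Evaluation of de Morgan terms\<close>

lemma eval_dmt_range: "0 \<le> eval_dmt u t \<and> eval_dmt u t \<le> 1"
  by (induction t) auto

lemma dm_eq_eval_dmt: "dm_eq s t \<Longrightarrow> eval_dmt u s = eval_dmt u t"
proof (induction rule: dm_eq.induct)
  case (dm_meet_one x)
  then show ?case using eval_dmt_range[of u x] by simp
next
  case (dm_join_zero x)
  then show ?case using eval_dmt_range[of u x] by simp
next
  case (dm_meet_zero x)
  then show ?case using eval_dmt_range[of u x] by simp
next
  case (dm_join_one x)
  then show ?case using eval_dmt_range[of u x] by simp
qed (auto simp: min_def max_def)

lemma dm_eq_rep_abs: "dm_eq (rep_dm (abs_dm t)) t"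
  using Quotient3_rep_abs[OF Quotient3_dm] equivp_reflp[OF equivp_dm_eq] by blast

lemma eval_dm_abs_dm [simp]: "eval_dm u (abs_dm t) = eval_dmt u t"
  unfolding eval_dm_def using dm_eq_eval_dmt[OF dm_eq_rep_abs] by blast

lemma eval_dm_range: "0 \<le> eval_dm u r \<and> eval_dm u r \<le> 1"
  unfolding eval_dm_def by (rule eval_dmt_range)

lemma eval_dmt_cong: "(\<And>i. i \<in> dvars t \<Longrightarrow> u i = v i) \<Longrightarrow> eval_dmt u t = eval_dmt v t"
  by (induction t) auto

lemma eval_dm_cong_dM:
  assumes "r \<in> dM I" and "\<And>i. i \<in> I \<Longrightarrow> u i = v i"
  shows "eval_dm u r = eval_dm v r"
proof -
  obtain t where "r = abs_dm t" "dvars t \<subseteq> I"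
    using assms(1) unfolding dM_def by blast
  then show ?thesis
    using eval_dmt_cong[of t u v] assms(2) by auto
qed

lemma dm_eq_DMeet_DZero: "dm_eq x DZero \<or> dm_eq y DZero \<Longrightarrow> dm_eq (DMeet x y) DZero"
  by (meson dm_eq.intros)

lemma dm_eq_DMeet_DOne: "dm_eq x DOne \<Longrightarrow> dm_eq y DOne \<Longrightarrow> dm_eq (DMeet x y) DOne"
  by (meson dm_eq.intros)

lemma dm_eq_DJoin_DOne: "dm_eq x DOne \<or> dm_eq y DOne \<Longrightarrow> dm_eq (DJoin x y) DOne"
  by (meson dm_eq.intros)

lemma dm_eq_DJoin_DZero: "dm_eq x DZero \<Longrightarrow> dm_eq y DZero \<Longrightarrow> dm_eq (DJoin x y) DZero"
  by (meson dm_eq.intros)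

lemma dm_eq_of_eval_centre:
  "(eval_dmt (\<lambda>_. 1/2) t = 0 \<longrightarrow> dm_eq t DZero) \<and> (eval_dmt (\<lambda>_. 1/2) t = 1 \<longrightarrow> dm_eq t DOne)"
proof (induction t)
  case (DMeet x y)
  then show ?case
    using eval_dmt_range[of "\<lambda>_. 1/2" x] eval_dmt_range[of "\<lambda>_. 1/2" y]
    by (auto simp: min_def intro: dm_eq_DMeet_DZero dm_eq_DMeet_DOne split: if_splits)
next
  case (DJoin x y)
  then show ?case
    using eval_dmt_range[of "\<lambda>_. 1/2" x] eval_dmt_range[of "\<lambda>_. 1/2" y]
    by (auto simp: max_def intro: dm_eq_DJoin_DZero dm_eq_DJoin_DOne split: if_splits)
qed (auto intro: dm_eq.intros)

lemma eval_dmt_centre_cases: "eval_dmt (\<lambda>_. 1/2) t \<in> {0, 1/2, 1}"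
  by (induction t) (auto simp: min_def max_def)

lemma eval_dm_centre:
  assumes "r \<noteq> dm_zero" and "r \<noteq> dm_one"
  shows "eval_dm (\<lambda>_. 1/2) r = 1/2"
proof -
  have r: "r = abs_dm (rep_dm r)"
    using Quotient3_abs_rep[OF Quotient3_dm] by metis
  have "eval_dmt (\<lambda>_. 1/2) (rep_dm r) \<noteq> 0" "eval_dmt (\<lambda>_. 1/2) (rep_dm r) \<noteq> 1"
    using dm_eq_of_eval_centre[of "rep_dm r"] assms r dm.abs_eq_iff
    unfolding dm_zero_def dm_one_def by metis+
  then show ?thesis
    using eval_dmt_centre_cases[of "rep_dm r"] unfolding eval_dm_def by auto
qed

section \<open>Semantics and completeness of the face lattice\<close>

fun ft_holds :: "ft \<Rightarrow> (nat \<Rightarrow> real) \<Rightarrow> bool" where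
  "ft_holds (FEq i b) u \<longleftrightarrow> u i = (if b then 1 else 0)"
| "ft_holds FZero u \<longleftrightarrow> False"
| "ft_holds FOne u \<longleftrightarrow> True"
| "ft_holds (FMeet x y) u \<longleftrightarrow> ft_holds x u \<and> ft_holds y u"
| "ft_holds (FJoin x y) u \<longleftrightarrow> ft_holds x u \<or> ft_holds y u"

lemma f_eq_ft_holds: "f_eq s t \<Longrightarrow> ft_holds s u = ft_holds t u"
  by (induction rule: f_eq.induct) auto

lift_definition face_holds :: "face \<Rightarrow> (nat \<Rightarrow> real) \<Rightarrow> bool" is ft_holds
  using f_eq_ft_holds by blast

lemma face_holds_abs_face [simp]: "face_holds (abs_face t) = ft_holds t"
  by transfer simp

lemma face_holds_eq_rep: "face_holds \<psi> = ft_holds (rep_face \<psi>)"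
  unfolding face_holds_def by simp

lift_definition face_atom :: "nat \<Rightarrow> bool \<Rightarrow> face" is FEq .

instantiation face :: bounded_lattice
begin

lift_definition inf_face :: "face \<Rightarrow> face \<Rightarrow> face" is FMeet by (rule f_cong_meet)
lift_definition sup_face :: "face \<Rightarrow> face \<Rightarrow> face" is FJoin by (rule f_cong_join)
lift_definition bot_face :: face is FZero .
lift_definition top_face :: face is FOne .

definition less_eq_face :: "face \<Rightarrow> face \<Rightarrow> bool" where
  "less_eq_face x y \<longleftrightarrow> inf x y = x"

definition less_face :: "face \<Rightarrow> face \<Rightarrow> bool" where
  "less_face x y \<longleftrightarrow> x \<le> y \<and> x \<noteq> y"

lemma face_inf_assoc: "inf (inf x y) z = inf x (inf y z)" for x y z :: face
  by transfer (rule f_meet_assoc)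
lemma face_sup_assoc: "sup (sup x y) z = sup x (sup y z)" for x y z :: face
  by transfer (rule f_join_assoc)
lemma face_inf_commute: "inf x y = inf y x" for x y :: face
  by transfer (rule f_meet_comm)
lemma face_sup_commute: "sup x y = sup y x" for x y :: face
  by transfer (rule f_join_comm)
lemma face_inf_sup_absorb: "inf x (sup x y) = x" for x y :: face
  by transfer (rule f_meet_absorb)
lemma face_sup_inf_absorb: "sup x (inf x y) = x" for x y :: face
  by transfer (rule f_join_absorb)
lemma face_inf_top: "inf x top = x" for x :: face
  by transfer (rule f_meet_one)
lemma face_inf_bot: "inf x bot = bot" for x :: face
  by transfer (rule f_meet_zero)

lemma face_inf_idem: "inf x x = x" for x :: face
  by (metis face_inf_sup_absorb face_sup_inf_absorb)

lemma face_le_iff_sup: "x \<le> y \<longleftrightarrow> sup x y = y" for x y :: face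
  unfolding less_eq_face_def
  by (metis face_inf_commute face_inf_sup_absorb face_sup_commute face_sup_inf_absorb)

instance
proof
  fix x y z :: face
  show "x < y \<longleftrightarrow> x \<le> y \<and> \<not> y \<le> x"
    unfolding less_face_def less_eq_face_def by (metis face_inf_commute)
  show "x \<le> x"
    unfolding less_eq_face_def by (rule face_inf_idem)
  show "x \<le> y \<Longrightarrow> y \<le> z \<Longrightarrow> x \<le> z"
    unfolding less_eq_face_def by (metis face_inf_assoc)
  show "x \<le> y \<Longrightarrow> y \<le> x \<Longrightarrow> x = y"
    unfolding less_eq_face_def by (metis face_inf_commute)
  show "inf x y \<le> x" "inf x y \<le> y"
    unfolding less_eq_face_def by (metis face_inf_assoc face_inf_commute face_inf_idem)+
  show "x \<le> y \<Longrightarrow> x \<le> z \<Longrightarrow> x \<le> inf y z"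
    unfolding less_eq_face_def by (metis face_inf_assoc)
  show "x \<le> sup x y" "y \<le> sup x y"
    unfolding less_eq_face_def by (metis face_inf_sup_absorb face_sup_commute)+
  show "y \<le> x \<Longrightarrow> z \<le> x \<Longrightarrow> sup y z \<le> x"
    unfolding face_le_iff_sup by (metis face_sup_assoc)
  show "bot \<le> x"
    unfolding less_eq_face_def by (metis face_inf_bot face_inf_commute)
  show "x \<le> top"
    unfolding less_eq_face_def by (rule face_inf_top)
qed

end

instance face :: distrib_lattice
proof
  fix x y z :: face
  have "inf x (sup y z) = sup (inf x y) (inf x z)" for x y z :: face
    by transfer (rule f_distrib)
  then show "sup x (inf y z) = inf (sup x y) (sup x z)"
    by (rule distrib_imp1)
qed

lemma face_holds_lattice [simp]:
  "face_holds (inf x y) u \<longleftrightarrow> face_holds x u \<and> face_holds y u"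
  "face_holds (sup x y) u \<longleftrightarrow> face_holds x u \<or> face_holds y u"
  "face_holds top u"
  "\<not> face_holds bot u"
  "face_holds (face_atom i b) u \<longleftrightarrow> u i = (if b then 1 else 0)"
  by (transfer, simp)+

lemma abs_face_simps:
  "abs_face (FMeet s t) = inf (abs_face s) (abs_face t)"
  "abs_face (FJoin s t) = sup (abs_face s) (abs_face t)"
  "abs_face FZero = bot" "abs_face FOne = top" "abs_face (FEq i b) = face_atom i b"
  by (transfer, rule f_refl)+

lemma face_one_eq_top: "face_one = top"
  unfolding face_one_def abs_face_simps ..

lemma face_one_FL: "face_one \<in> FL I"
  unfolding FL_def face_one_def by force

fun conj_face :: "(nat \<times> bool) list \<Rightarrow> face" where
  "conj_face [] = top"
| "conj_face ((i, b) # c) = inf (face_atom i b) (conj_face c)"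

fun disj_face :: "(nat \<times> bool) list list \<Rightarrow> face" where
  "disj_face [] = bot"
| "disj_face (c # D) = sup (conj_face c) (disj_face D)"

lemma conj_face_append: "conj_face (c @ d) = inf (conj_face c) (conj_face d)"
  by (induction c rule: conj_face.induct) (auto simp: inf_assoc)

lemma disj_face_append: "disj_face (D @ E) = sup (disj_face D) (disj_face E)"
  by (induction D) (auto simp: sup_assoc)

lemma inf_conj_disj_face: "inf (conj_face c) (disj_face E) = disj_face (map ((@) c) E)"
  by (induction E) (auto simp: inf_sup_distrib1 conj_face_append)

lemma inf_disj_face:
  "inf (disj_face D) (disj_face E) = disj_face (concat (map (\<lambda>c. map ((@) c) E) D))"
  by (induction D) (auto simp: inf_sup_distrib2 inf_conj_disj_face disj_face_append)

lemma face_dnf: "\<exists>D. \<psi> = disj_face D"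
proof -
  have "\<exists>D. abs_face t = disj_face D" for t
  proof (induction t)
    case (FEq i b)
    show ?case by (rule exI[of _ "[[(i, b)]]"]) (simp add: abs_face_simps)
  next
    case FZero
    show ?case by (rule exI[of _ "[]"]) (simp add: abs_face_simps)
  next
    case FOne
    show ?case by (rule exI[of _ "[[]]"]) (simp add: abs_face_simps)
  next
    case (FMeet x y)
    then show ?case by (metis abs_face_simps(1) inf_disj_face)
  next
    case (FJoin x y)
    then show ?case by (metis abs_face_simps(2) disj_face_append)
  qed
  then show ?thesis
    by (metis Quotient3_abs_rep[OF Quotient3_face])
qed

definition consistent :: "(nat \<times> bool) list \<Rightarrow> bool" where
  "consistent c \<longleftrightarrow> (\<forall>i. \<not> ((i, True) \<in> set c \<and> (i, False) \<in> set c))"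

definition generic_point :: "(nat \<times> bool) list \<Rightarrow> nat \<Rightarrow> real" where
  "generic_point c i =
     (if (i, True) \<in> set c then 1 else if (i, False) \<in> set c then 0 else 1/2)"

lemma generic_point_range: "range (generic_point c) \<subseteq> {0..1}"
  unfolding generic_point_def by auto

lemma face_holds_conj_face:
  "face_holds (conj_face c) u \<longleftrightarrow> (\<forall>(i, b)\<in>set c. u i = (if b then 1 else 0))"
  by (induction c rule: conj_face.induct) auto

lemma face_holds_generic_point:
  "consistent c \<Longrightarrow> face_holds (conj_face c) (generic_point c)"
  unfolding face_holds_conj_face generic_point_def consistent_def by auto

lemma conj_face_le_atom: "(i, b) \<in> set c \<Longrightarrow> conj_face c \<le> face_atom i b"
  by (induction c rule: conj_face.induct) (auto intro: le_infI2)

lemma conj_face_inconsistent: "\<not> consistent c \<Longrightarrow> conj_face c = bot"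
proof -
  assume "\<not> consistent c"
  then obtain i where "(i, True) \<in> set c" "(i, False) \<in> set c"
    unfolding consistent_def by blast
  then have "conj_face c \<le> inf (face_atom i False) (face_atom i True)"
    by (simp add: conj_face_le_atom)
  also have "\<dots> = bot"
    by transfer (rule f_contra)
  finally show ?thesis
    by (simp add: bot_unique)
qed

lemma conj_face_le_if_holds_generic_point:
  "consistent c \<Longrightarrow> ft_holds t (generic_point c) \<Longrightarrow> conj_face c \<le> abs_face t"
proof (induction t)
  case (FEq i b)
  then have "(i, b) \<in> set c"
    unfolding generic_point_def consistent_def by (auto split: if_splits)
  then show ?case
    by (simp add: conj_face_le_atom abs_face_simps)
next
  case (FJoin x y)
  then show ?case
    by (auto simp: abs_face_simps intro: le_supI1 le_supI2)
qed (auto simp: abs_face_simps)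

text \<open>By \<open>face_dnf\<close> it suffices to bound a conjunction of atoms: an inconsistent one is
  \<open>\<bottom>\<close>, and a consistent one lies below every face holding at its generic point.\<close>
lemma face_leI:
  assumes "\<And>u. range u \<subseteq> {0..1} \<Longrightarrow> face_holds \<phi> u \<Longrightarrow> face_holds \<psi> u"
  shows "\<phi> \<le> \<psi>"
proof -
  obtain D where D: "\<phi> = disj_face D"
    using face_dnf by blast
  obtain t where t: "\<psi> = abs_face t"
    by (metis Quotient3_abs_rep[OF Quotient3_face])
  have "conj_face c \<le> \<psi>" if c: "c \<in> set D" for c
  proof (cases "consistent c")
    case True
    have "face_holds (disj_face D) (generic_point c)"
      using c face_holds_generic_point[OF True] by (induction D) auto
    then have "ft_holds t (generic_point c)"
      using assms generic_point_range D t by auto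
    then show ?thesis
      using conj_face_le_if_holds_generic_point[OF True] t by simp
  qed (simp add: conj_face_inconsistent)
  then have "disj_face D \<le> \<psi>"
    by (induction D) auto
  then show ?thesis
    using D by simp
qed

lemma face_eqI:
  "(\<And>u. range u \<subseteq> {0..1} \<Longrightarrow> face_holds \<phi> u \<longleftrightarrow> face_holds \<psi> u) \<Longrightarrow> \<phi> = \<psi>"
  by (metis face_leI order_antisym)

section \<open>Substitution and composition of morphisms\<close>

text \<open>The map \<open>[0,1]\<^sup>I \<rightarrow> [0,1]\<^sup>J\<close> induced by \<open>f\<close>, without the restriction to \<open>J\<close> that
  \<open>cmap\<close> performs. Being defined everywhere, it makes the substitution and composition laws
  below hold without side conditions.\<close>
definition mor_eval :: "(nat \<Rightarrow> dm) \<Rightarrow> (nat \<Rightarrow> real) \<Rightarrow> nat \<Rightarrow> real" where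
  "mor_eval f u = (\<lambda>j. eval_dm u (f j))"

lemma cmap_eq_restrict: "cmap J f u = restrict (mor_eval f u) J"
  unfolding cmap_def mor_eval_def ..

lemma mor_eval_range: "range (mor_eval f u) \<subseteq> {0..1}"
  unfolding mor_eval_def using eval_dm_range by auto

lemma cmap_cube: "cmap J f u \<in> cube J"
  unfolding cmap_eq_restrict cube_def using mor_eval_range[of f u] by (auto simp: image_subset_iff)

lemma cmap_id_cube: "x \<in> A \<times> {0..1} \<Longrightarrow> cmap_id J f x \<in> cube J \<times> {0..1}"
  unfolding cmap_id_def using cmap_cube by (auto simp: mem_Times_iff)

lemma Hom_mono: "f \<in> Hom I J \<Longrightarrow> J' \<subseteq> J \<Longrightarrow> f \<in> Hom I J'"
  unfolding Hom_def by auto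

lemma Hom_obtain_terms:
  assumes "f \<in> Hom I J"
  obtains T where "\<And>j. j \<in> J \<Longrightarrow> f j = abs_dm (T j) \<and> dvars (T j) \<subseteq> I"
proof -
  have "\<forall>j\<in>J. \<exists>t. f j = abs_dm t \<and> dvars t \<subseteq> I"
    using assms unfolding Hom_def dM_def by blast
  then show ?thesis
    using that by metis
qed

lemma ft_holds_to_ft:
  "range u \<subseteq> {0..1} \<Longrightarrow> ft_holds (to_ft b t) u \<longleftrightarrow> eval_dmt u t = (if b then 1 else 0)"
proof (induction t arbitrary: b)
  case (DVar i)
  then have "0 \<le> u i" "u i \<le> 1"
    by (auto simp: image_subset_iff)
  then show ?case
    by (auto simp: min_def max_def)
next
  case (DMeet x y)
  then show ?case
    using eval_dmt_range[of u x] eval_dmt_range[of u y] by (auto simp: min_def max_def)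
next
  case (DJoin x y)
  then show ?case
    using eval_dmt_range[of u x] eval_dmt_range[of u y] by (auto simp: min_def max_def)
qed auto

lemma ft_holds_subst_ft:
  "(\<And>j b. ft_holds (s j b) u \<longleftrightarrow> v j = (if b then 1 else 0)) \<Longrightarrow>
    ft_holds (subst_ft s t) u \<longleftrightarrow> ft_holds t v"
  by (induction t) auto

lemma face_holds_face_sub:
  "range u \<subseteq> {0..1} \<Longrightarrow> face_holds (face_sub \<psi> f) u \<longleftrightarrow> face_holds \<psi> (mor_eval f u)"
  unfolding face_sub_def face_holds_abs_face
  unfolding face_holds_eq_rep
  by (rule ft_holds_subst_ft) (simp add: ft_holds_to_ft mor_eval_def eval_dm_def)

lemma face_sub_cong: "(\<And>u. mor_eval f u = mor_eval g u) \<Longrightarrow> face_sub \<psi> f = face_sub \<psi> g"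
  by (rule face_eqI) (simp add: face_holds_face_sub)

lemma face_sub_one: "face_sub face_one f = face_one"
  by (rule face_eqI) (simp add: face_holds_face_sub face_one_eq_top)

lemma ft_holds_cong: "(\<And>i. i \<in> fvars t \<Longrightarrow> u i = v i) \<Longrightarrow> ft_holds t u = ft_holds t v"
  by (induction t) auto

lemma fvars_to_ft: "fvars (to_ft b t) = dvars t"
  by (induction t arbitrary: b) auto

lemma fvars_subst_ft: "fvars (subst_ft s t) \<subseteq> (\<Union>j\<in>fvars t. \<Union>b. fvars (s j b))"
  by (induction t) auto

lemma face_sub_FL:
  assumes f: "f \<in> Hom I J" and \<psi>: "\<psi> \<in> FL J"
  shows "face_sub \<psi> f \<in> FL I"
proof -
  obtain T where T: "\<And>j. j \<in> J \<Longrightarrow> f j = abs_dm (T j) \<and> dvars (T j) \<subseteq> I"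
    using Hom_obtain_terms[OF f] by blast
  obtain t where t: "\<psi> = abs_face t" "fvars t \<subseteq> J"
    using \<psi> unfolding FL_def by blast
  define s where "s = (\<lambda>j b. to_ft b (T j))"
  have "face_sub \<psi> f = abs_face (subst_ft s t)"
  proof (rule face_eqI)
    fix u :: "nat \<Rightarrow> real"
    assume u: "range u \<subseteq> {0..1}"
    have "face_holds (face_sub \<psi> f) u \<longleftrightarrow> ft_holds t (mor_eval f u)"
      using face_holds_face_sub[OF u] t(1) by simp
    also have "\<dots> \<longleftrightarrow> ft_holds t (\<lambda>j. eval_dmt u (T j))"
      by (rule ft_holds_cong) (use t(2) T in \<open>auto simp: mor_eval_def\<close>)
    also have "\<dots> \<longleftrightarrow> ft_holds (subst_ft s t) u"
      by (rule ft_holds_subst_ft[symmetric]) (simp add: s_def ft_holds_to_ft[OF u])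
    finally show "face_holds (face_sub \<psi> f) u \<longleftrightarrow> face_holds (abs_face (subst_ft s t)) u"
      by simp
  qed
  moreover have "fvars (subst_ft s t) \<subseteq> I"
    using fvars_subst_ft[of s t] t(2) T by (auto simp: s_def fvars_to_ft)
  ultimately show ?thesis
    unfolding FL_def by blast
qed

lemma ft_holds_everywhere_if_interior:
  "fvars t \<subseteq> J \<Longrightarrow> (\<And>j. j \<in> J \<Longrightarrow> v j \<noteq> 0 \<and> v j \<noteq> 1) \<Longrightarrow> ft_holds t v \<Longrightarrow> ft_holds t w"
  by (induction t) auto

text \<open>A strict morphism sends the centre of the cube to the centre of the cube, and the
  only face containing the centre is \<open>1\<^sub>\<bbbF>\<close>.\<close>
lemma face_sub_strict_ne_one:
  assumes \<psi>: "\<psi> \<in> FL J" and ne: "\<psi> \<noteq> face_one" and f: "strict J f"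
  shows "face_sub \<psi> f \<noteq> face_one"
proof
  assume eq: "face_sub \<psi> f = face_one"
  obtain t where t: "\<psi> = abs_face t" "fvars t \<subseteq> J"
    using \<psi> unfolding FL_def by blast
  have centre: "range (\<lambda>_. 1/2 :: real) \<subseteq> {0..1}"
    by auto
  have holds: "ft_holds t (mor_eval f (\<lambda>_. 1/2))"
    using face_holds_face_sub[OF centre, of \<psi> f] eq t(1) by (simp add: face_one_eq_top)
  have "mor_eval f (\<lambda>_. 1/2) j \<noteq> 0 \<and> mor_eval f (\<lambda>_. 1/2) j \<noteq> 1" if "j \<in> J" for j
    using f that eval_dm_centre[of "f j"] unfolding strict_def mor_eval_def by auto
  then have "ft_holds t w" for w
    using ft_holds_everywhere_if_interior[OF t(2) _ holds] by blast
  then have "\<psi> = face_one"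
    by (intro face_eqI) (simp add: t(1) face_one_eq_top)
  with ne show False ..
qed

fun dsubst :: "(nat \<Rightarrow> dmt) \<Rightarrow> dmt \<Rightarrow> dmt" where
  "dsubst \<rho> (DVar i) = \<rho> i"
| "dsubst \<rho> DZero = DZero"
| "dsubst \<rho> DOne = DOne"
| "dsubst \<rho> (DMeet x y) = DMeet (dsubst \<rho> x) (dsubst \<rho> y)"
| "dsubst \<rho> (DJoin x y) = DJoin (dsubst \<rho> x) (dsubst \<rho> y)"
| "dsubst \<rho> (DNeg x) = DNeg (dsubst \<rho> x)"

lemma eval_dmt_dsubst: "eval_dmt u (dsubst \<rho> t) = eval_dmt (\<lambda>m. eval_dmt u (\<rho> m)) t"
proof (induction t)
  case (DVar i)
  then show ?case
    using eval_dmt_range[of u "\<rho> i"] by simp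
qed simp_all

lemma dvars_dsubst: "dvars (dsubst \<rho> t) = (\<Union>m\<in>dvars t. dvars (\<rho> m))"
  by (induction t) auto

lemma dm_eq_dsubst: "dm_eq s t \<Longrightarrow> dm_eq (dsubst \<rho> s) (dsubst \<rho> t)"
  by (induction rule: dm_eq.induct) (auto intro: dm_eq.intros)

lemma dm_eq_dsubst_cong:
  "(\<And>m. m \<in> dvars t \<Longrightarrow> dm_eq (\<rho> m) (\<sigma> m)) \<Longrightarrow> dm_eq (dsubst \<rho> t) (dsubst \<sigma> t)"
  by (induction t) (auto intro: dm_eq.intros)

text \<open>The composite \<open>f \<circ> g\<close> (first \<open>g\<close>, then \<open>f\<close>), substituting \<open>g\<close> into the chosen
  representatives of the values of \<open>f\<close>.\<close>
definition mor_comp :: "(nat \<Rightarrow> dm) \<Rightarrow> (nat \<Rightarrow> dm) \<Rightarrow> nat \<Rightarrow> dm" where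
  "mor_comp f g = (\<lambda>j. abs_dm (dsubst (\<lambda>m. rep_dm (g m)) (rep_dm (f j))))"

lemma mor_eval_mor_comp: "mor_eval (mor_comp f g) u = mor_eval f (mor_eval g u)"
  unfolding mor_eval_def mor_comp_def eval_dm_abs_dm eval_dmt_dsubst
  unfolding eval_dm_def ..

lemma Hom_mor_comp:
  assumes f: "f \<in> Hom I J" and g: "g \<in> Hom I' I"
  shows "mor_comp f g \<in> Hom I' J"
proof -
  obtain T where T: "\<And>j. j \<in> J \<Longrightarrow> f j = abs_dm (T j) \<and> dvars (T j) \<subseteq> I"
    using Hom_obtain_terms[OF f] by blast
  obtain S where S: "\<And>m. m \<in> I \<Longrightarrow> g m = abs_dm (S m) \<and> dvars (S m) \<subseteq> I'"
    using Hom_obtain_terms[OF g] by blast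
  have "mor_comp f g j = abs_dm (dsubst S (T j))" if j: "j \<in> J" for j
  proof -
    have "dm_eq (dsubst (\<lambda>m. rep_dm (g m)) (rep_dm (f j))) (dsubst (\<lambda>m. rep_dm (g m)) (T j))"
      using T[OF j] dm_eq_dsubst dm_eq_rep_abs by metis
    moreover have "dm_eq (dsubst (\<lambda>m. rep_dm (g m)) (T j)) (dsubst S (T j))"
      using T[OF j] S dm_eq_rep_abs by (intro dm_eq_dsubst_cong) auto
    ultimately show ?thesis
      unfolding mor_comp_def by (metis dm.abs_eq_iff dm_trans)
  qed
  moreover have "dvars (dsubst S (T j)) \<subseteq> I'" if "j \<in> J" for j
    using T[OF that] S by (auto simp: dvars_dsubst)
  ultimately show ?thesis
    unfolding Hom_def dM_def by blast
qed

lemma cmap_mor_comp: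
  assumes "f \<in> Hom I J"
  shows "cmap J (mor_comp f g) u = cmap J f (cmap I g u)"
proof -
  have "eval_dm (mor_eval g u) (f j) = eval_dm (restrict (mor_eval g u) I) (f j)" if "j \<in> J" for j
    using assms that by (intro eval_dm_cong_dM[of _ I]) (auto simp: Hom_def)
  then show ?thesis
    unfolding cmap_eq_restrict mor_eval_mor_comp by (auto simp: mor_eval_def)
qed

lemma cmap_id_mor_comp:
  "f \<in> Hom I J \<Longrightarrow> cmap_id J (mor_comp f g) x = cmap_id J f (cmap_id I g x)"
  unfolding cmap_id_def by (simp add: cmap_mor_comp)

lemma face_sub_mor_comp: "face_sub (face_sub \<psi> f) g = face_sub \<psi> (mor_comp f g)"
  by (rule face_eqI) (simp add: face_holds_face_sub mor_eval_range mor_eval_mor_comp)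

section \<open>Face maps and degenerate morphisms\<close>

lemma mor_eval_face_mor:
  "mor_eval (face_mor i b) v = (\<lambda>m. if m = i then (if b then 1 else 0) else max 0 (min 1 (v m)))"
  unfolding mor_eval_def face_mor_def dm_one_def dm_zero_def by auto

lemma face_mor_Hom: "face_mor i b \<in> Hom (I - {i}) I"
proof -
  have "face_mor i b j \<in> dM (I - {i})" if "j \<in> I" for j
  proof (cases "j = i")
    case True
    then show ?thesis
      unfolding face_mor_def dm_one_def dm_zero_def dM_def by force
  next
    case False
    then have "face_mor i b j = abs_dm (DVar j)" "dvars (DVar j) \<subseteq> I - {i}"
      using that by (simp_all add: face_mor_def)
    then show ?thesis
      unfolding dM_def by blast
  qed
  then show ?thesis
    unfolding Hom_def by blast
qed

lemma mor_eval_degenerate: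
  assumes "f j = (if b then dm_one else dm_zero)"
  shows "mor_eval (mor_comp (face_mor j b) f) u = mor_eval f u"
  using assms eval_dm_range unfolding mor_eval_mor_comp mor_eval_face_mor
  by (auto simp: mor_eval_def dm_one_def dm_zero_def)

lemma cmap_degenerate:
  assumes "f j = (if b then dm_one else dm_zero)"
  shows "cmap J f u = cmap J (face_mor j b) (cmap (J - {j}) f u)"
proof -
  have "cmap J f u = cmap J (mor_comp (face_mor j b) f) u"
    unfolding cmap_eq_restrict mor_eval_degenerate[of f j b, OF assms] ..
  also have "\<dots> = cmap J (face_mor j b) (cmap (J - {j}) f u)"
    by (rule cmap_mor_comp[OF face_mor_Hom])
  finally show ?thesis .
qed

lemma face_sub_degenerate:
  assumes "f j = (if b then dm_one else dm_zero)"
  shows "face_sub (face_sub \<psi> (face_mor j b)) f = face_sub \<psi> f"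
  unfolding face_sub_mor_comp using mor_eval_degenerate[of f j b, OF assms] by (rule face_sub_cong)

lemma restrict_cube: "u \<in> cube I \<Longrightarrow> J \<subseteq> I \<Longrightarrow> restrict u J \<in> cube J"
  unfolding cube_def by auto

lemma cmap_face_mor_restrict:
  assumes "u \<in> cube I" and "u i = (if b then 1 else 0)"
  shows "cmap I (face_mor i b) (restrict u (I - {i})) = u"
proof
  fix m
  show "cmap I (face_mor i b) (restrict u (I - {i})) m = u m"
    using assms unfolding cmap_eq_restrict mor_eval_face_mor cube_def
    by (cases "m \<in> I") (auto simp: PiE_def extensional_def Pi_iff)
qed

section \<open>Naturality of the retractions \<open>r\<^sub>\<psi>\<close>\<close>

definition open_box :: "nat set \<Rightarrow> ((nat \<Rightarrow> real) \<times> real) set" where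
  "open_box I = {(u, z) \<in> cube I \<times> {0..1}. boundary I u \<or> z = 0}"

lemma open_box_subset: "open_box I \<subseteq> cube I \<times> {0..1}"
  unfolding open_box_def by auto

text \<open>The assumptions are (2) and (a)--(d) of the theorem.\<close>
locale box_retractions =
  fixes r :: "nat set \<Rightarrow> (nat \<Rightarrow> real) \<times> real \<Rightarrow> (nat \<Rightarrow> real) \<times> real"
    and rpsi :: "nat set \<Rightarrow> face \<Rightarrow> (nat \<Rightarrow> real) \<times> real \<Rightarrow> (nat \<Rightarrow> real) \<times> real"
  assumes r_open_box: "finite I \<Longrightarrow> x \<in> cube I \<times> {0..1} \<Longrightarrow> r I x \<in> open_box I"
    and r_strict: "finite I \<Longrightarrow> finite J \<Longrightarrow> f \<in> Hom I J \<Longrightarrow> strict J f \<Longrightarrow>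
      x \<in> cube I \<times> {0..1} \<Longrightarrow> r J (cmap_id J f (r I x)) = r J (cmap_id J f x)"
    and rpsi_one: "finite I \<Longrightarrow> x \<in> cube I \<times> {0..1} \<Longrightarrow> rpsi I face_one x = x"
    and rpsi_r: "finite I \<Longrightarrow> \<psi> \<in> FL I \<Longrightarrow> \<psi> \<noteq> face_one \<Longrightarrow>
      x \<in> cube I \<times> {0..1} \<Longrightarrow> rpsi I \<psi> x = rpsi I \<psi> (r I x)"
    and rpsi_bottom: "finite I \<Longrightarrow> \<psi> \<in> FL I \<Longrightarrow> u \<in> cube I \<Longrightarrow> rpsi I \<psi> (u, 0) = (u, 0)"
    and rpsi_face: "finite I \<Longrightarrow> \<psi> \<in> FL I \<Longrightarrow> i \<in> I \<Longrightarrow> x \<in> cube (I - {i}) \<times> {0..1} \<Longrightarrow>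
      rpsi I \<psi> (cmap_id I (face_mor i b) x)
        = cmap_id I (face_mor i b) (rpsi (I - {i}) (face_sub \<psi> (face_mor i b)) x)"
begin

definition natural :: "nat set \<Rightarrow> nat set \<Rightarrow> (nat \<Rightarrow> dm) \<Rightarrow> bool" where
  "natural I J f \<longleftrightarrow> (\<forall>\<psi>\<in>FL J. \<forall>x\<in>cube I \<times> {0..1}.
     rpsi J \<psi> (cmap_id J f x) = cmap_id J f (rpsi I (face_sub \<psi> f) x))"

lemma naturalD:
  "natural I J f \<Longrightarrow> \<psi> \<in> FL J \<Longrightarrow> x \<in> cube I \<times> {0..1} \<Longrightarrow>
    rpsi J \<psi> (cmap_id J f x) = cmap_id J f (rpsi I (face_sub \<psi> f) x)"
  unfolding natural_def by blast

lemma natural_degenerate: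
  assumes J: "finite J" and f: "f \<in> Hom I J" and j: "j \<in> J"
    and fj: "f j = (if b then dm_one else dm_zero)" and nat: "natural I (J - {j}) f"
  shows "natural I J f"
  unfolding natural_def
proof (intro ballI)
  fix \<psi> and x :: "(nat \<Rightarrow> real) \<times> real"
  assume \<psi>: "\<psi> \<in> FL J" and x: "x \<in> cube I \<times> {0..1}"
  define \<psi>' where "\<psi>' = face_sub \<psi> (face_mor j b)"
  have \<psi>': "\<psi>' \<in> FL (J - {j})"
    unfolding \<psi>'_def using face_mor_Hom \<psi> by (rule face_sub_FL)
  have factor: "cmap_id J f y = cmap_id J (face_mor j b) (cmap_id (J - {j}) f y)" for y
    using cmap_degenerate[of f j b J, OF fj] by (simp add: cmap_id_def)
  have "rpsi J \<psi> (cmap_id J f x) = cmap_id J (face_mor j b) (rpsi (J - {j}) \<psi>' (cmap_id (J - {j}) f x))"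
    unfolding factor \<psi>'_def using J \<psi> j cmap_id_cube[OF x] by (rule rpsi_face)
  also have "\<dots> = cmap_id J (face_mor j b) (cmap_id (J - {j}) f (rpsi I (face_sub \<psi>' f) x))"
    using naturalD[OF nat \<psi>' x] by simp
  also have "\<dots> = cmap_id J f (rpsi I (face_sub \<psi> f) x)"
    unfolding \<psi>'_def face_sub_degenerate[of f j b, OF fj] factor ..
  finally show "rpsi J \<psi> (cmap_id J f x) = cmap_id J f (rpsi I (face_sub \<psi> f) x)" .
qed

lemma natural_on_open_box:
  assumes I: "finite I" and J: "finite J" and f: "f \<in> Hom I J" and \<psi>: "\<psi> \<in> FL J"
    and y: "y \<in> open_box I"
    and faces: "\<And>i g. i \<in> I \<Longrightarrow> g \<in> Hom (I - {i}) J \<Longrightarrow> natural (I - {i}) J g"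
  shows "rpsi J \<psi> (cmap_id J f y) = cmap_id J f (rpsi I (face_sub \<psi> f) y)"
proof -
  obtain u z where yuz: "y = (u, z)" and u: "u \<in> cube I" and z: "z \<in> {0..1}"
    and "boundary I u \<or> z = 0"
    using y unfolding open_box_def by blast
  then consider "z = 0" | i b where "i \<in> I" "u i = (if b then 1 else 0)"
    unfolding boundary_def by (metis (full_types))
  then show ?thesis
  proof cases
    case 1
    then show ?thesis
      using rpsi_bottom[OF J \<psi> cmap_cube] rpsi_bottom[OF I face_sub_FL[OF f \<psi>] u] yuz
      by (simp add: cmap_id_def)
  next
    case (2 i b)
    define w where "w = restrict u (I - {i})"
    define g where "g = mor_comp f (face_mor i b)"
    have wz: "(w, z) \<in> cube (I - {i}) \<times> {0..1}"
      unfolding w_def using restrict_cube[OF u] z by blast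
    have y_face: "y = cmap_id I (face_mor i b) (w, z)"
      unfolding yuz w_def cmap_id_def using cmap_face_mor_restrict[OF u 2(2)] by simp
    have g: "g \<in> Hom (I - {i}) J"
      unfolding g_def using f face_mor_Hom by (rule Hom_mor_comp)
    have "rpsi J \<psi> (cmap_id J f y) = rpsi J \<psi> (cmap_id J g (w, z))"
      unfolding y_face g_def cmap_id_mor_comp[OF f] ..
    also have "\<dots> = cmap_id J g (rpsi (I - {i}) (face_sub \<psi> g) (w, z))"
      using naturalD[OF faces[OF 2(1) g] \<psi> wz] .
    also have "\<dots> = cmap_id J f (cmap_id I (face_mor i b)
        (rpsi (I - {i}) (face_sub (face_sub \<psi> f) (face_mor i b)) (w, z)))"
      unfolding g_def face_sub_mor_comp cmap_id_mor_comp[OF f] ..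
    also have "\<dots> = cmap_id J f (rpsi I (face_sub \<psi> f) y)"
      unfolding y_face using rpsi_face[OF I face_sub_FL[OF f \<psi>] 2(1) wz] by simp
    finally show ?thesis .
  qed
qed

lemma natural_strict:
  assumes I: "finite I" and J: "finite J" and f: "f \<in> Hom I J" and st: "strict J f"
    and faces: "\<And>i g. i \<in> I \<Longrightarrow> g \<in> Hom (I - {i}) J \<Longrightarrow> natural (I - {i}) J g"
  shows "natural I J f"
  unfolding natural_def
proof (intro ballI)
  fix \<psi> and x :: "(nat \<Rightarrow> real) \<times> real"
  assume \<psi>: "\<psi> \<in> FL J" and x: "x \<in> cube I \<times> {0..1}"
  show "rpsi J \<psi> (cmap_id J f x) = cmap_id J f (rpsi I (face_sub \<psi> f) x)"
  proof (cases "\<psi> = face_one")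
    case True
    then show ?thesis
      using rpsi_one[OF J cmap_id_cube[OF x]] rpsi_one[OF I x] by (simp add: face_sub_one)
  next
    case False
    have \<psi>f: "face_sub \<psi> f \<in> FL I" "face_sub \<psi> f \<noteq> face_one"
      using face_sub_FL[OF f \<psi>] face_sub_strict_ne_one[OF \<psi> False st] .
    have y: "r I x \<in> open_box I"
      using r_open_box[OF I x] .
    then have fy: "cmap_id J f (r I x) \<in> cube J \<times> {0..1}"
      using open_box_subset cmap_id_cube by blast
    have "rpsi J \<psi> (cmap_id J f x) = rpsi J \<psi> (r J (cmap_id J f (r I x)))"
      using rpsi_r[OF J \<psi> False cmap_id_cube[OF x]] r_strict[OF I J f st x] by simp
    also have "\<dots> = rpsi J \<psi> (cmap_id J f (r I x))"
      using rpsi_r[OF J \<psi> False fy] by simp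
    also have "\<dots> = cmap_id J f (rpsi I (face_sub \<psi> f) (r I x))"
      using natural_on_open_box[OF I J f \<psi> y faces] .
    also have "\<dots> = cmap_id J f (rpsi I (face_sub \<psi> f) x)"
      using rpsi_r[OF I \<psi>f x] by simp
    finally show ?thesis .
  qed
qed

lemma natural_all:
  assumes "finite I" and "finite J" and "f \<in> Hom I J"
  shows "natural I J f"
  using assms
proof (induction "card I + card J" arbitrary: I J f rule: less_induct)
  case less
  show ?case
  proof (cases "strict J f")
    case True
    have "natural (I - {i}) J g" if "i \<in> I" "g \<in> Hom (I - {i}) J" for i g
      using less card_Diff1_less[OF less.prems(1) that(1)] that(2) by simp
    then show ?thesis
      using natural_strict[OF less.prems True] by blast
  next
    case False
    then obtain j b where j: "j \<in> J" and fj: "f j = (if b then dm_one else dm_zero)"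
      unfolding strict_def by metis
    have "natural I (J - {j}) f"
      using less card_Diff1_less[OF less.prems(2) j] Hom_mono[OF less.prems(3)] by simp
    then show ?thesis
      using natural_degenerate[OF less.prems(2,3) j fj] by blast
  qed
qed

end

theorem theoremC1:
  fixes r :: "nat set \<Rightarrow> (nat \<Rightarrow> real) \<times> real \<Rightarrow> (nat \<Rightarrow> real) \<times> real"
    and rpsi :: "nat set \<Rightarrow> face \<Rightarrow> (nat \<Rightarrow> real) \<times> real \<Rightarrow> (nat \<Rightarrow> real) \<times> real"
  assumes r_maps: "\<And>I x. finite I \<Longrightarrow> x \<in> cube I \<times> {0..1} \<Longrightarrow> r I x \<in> cube I \<times> {0..1}"
    and r_idem: "\<And>I x. finite I \<Longrightarrow> x \<in> cube I \<times> {0..1} \<Longrightarrow> r I (r I x) = r I x"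
    and r_fix: "\<And>I u z. finite I \<Longrightarrow> u \<in> cube I \<Longrightarrow> z \<in> {0..1} \<Longrightarrow>
        r I (u, z) = (u, z) \<longleftrightarrow> boundary I u \<or> z = 0"
    and r_strict: "\<And>I J f x. finite I \<Longrightarrow> finite J \<Longrightarrow> f \<in> Hom I J \<Longrightarrow> strict J f \<Longrightarrow>
        x \<in> cube I \<times> {0..1} \<Longrightarrow> r J (cmap_id J f (r I x)) = r J (cmap_id J f x)"
    and rpsi_maps: "\<And>I \<psi> x. finite I \<Longrightarrow> \<psi> \<in> FL I \<Longrightarrow> x \<in> cube I \<times> {0..1} \<Longrightarrow>
        rpsi I \<psi> x \<in> cube I \<times> {0..1}"
    and rpsi_a: "\<And>I \<psi> x. finite I \<Longrightarrow> \<psi> \<in> FL I \<Longrightarrow> \<psi> = face_one \<Longrightarrow>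
        x \<in> cube I \<times> {0..1} \<Longrightarrow> rpsi I \<psi> x = x"
    and rpsi_b: "\<And>I \<psi> x. finite I \<Longrightarrow> \<psi> \<in> FL I \<Longrightarrow> \<psi> \<noteq> face_one \<Longrightarrow>
        x \<in> cube I \<times> {0..1} \<Longrightarrow> rpsi I \<psi> x = rpsi I \<psi> (r I x)"
    and rpsi_c: "\<And>I \<psi> u. finite I \<Longrightarrow> \<psi> \<in> FL I \<Longrightarrow> u \<in> cube I \<Longrightarrow>
        rpsi I \<psi> (u, 0) = (u, 0)"
    and rpsi_d: "\<And>I \<psi> i b x. finite I \<Longrightarrow> \<psi> \<in> FL I \<Longrightarrow> i \<in> I \<Longrightarrow>
        x \<in> cube (I - {i}) \<times> {0..1} \<Longrightarrow>
        rpsi I \<psi> (cmap_id I (face_mor i b) x)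
          = cmap_id I (face_mor i b) (rpsi (I - {i}) (face_sub \<psi> (face_mor i b)) x)"
  shows "\<And>I J f \<psi> x. finite I \<Longrightarrow> finite J \<Longrightarrow> f \<in> Hom I J \<Longrightarrow> \<psi> \<in> FL J \<Longrightarrow>
      x \<in> cube I \<times> {0..1} \<Longrightarrow>
      rpsi J \<psi> (cmap_id J f x) = cmap_id J f (rpsi I (face_sub \<psi> f) x)"
proof -
  interpret box_retractions r rpsi
  proof unfold_locales
    show "r I x \<in> open_box I" if I: "finite I" and x: "x \<in> cube I \<times> {0..1}" for I x
    proof -
      obtain u z where rx: "r I x = (u, z)" and u: "u \<in> cube I" and z: "z \<in> {0..1}"
        using r_maps[OF I x] by (cases "r I x") auto
      then have "boundary I u \<or> z = 0"
        using r_fix[OF I u z] r_idem[OF I x] by simp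
      then show ?thesis
        unfolding open_box_def using rx u z by simp
    qed
    show "rpsi I face_one x = x" if "finite I" and "x \<in> cube I \<times> {0..1}" for I x
      using rpsi_a[OF that(1) face_one_FL _ that(2)] by simp
  qed (fact r_strict rpsi_b rpsi_c rpsi_d)+
  show "\<And>I J f \<psi> x. finite I \<Longrightarrow> finite J \<Longrightarrow> f \<in> Hom I J \<Longrightarrow> \<psi> \<in> FL J \<Longrightarrow>
      x \<in> cube I \<times> {0..1} \<Longrightarrow>
      rpsi J \<psi> (cmap_id J f x) = cmap_id J f (rpsi I (face_sub \<psi> f) x)"
    using naturalD[OF natural_all] by blast
qed

end
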